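(* Let $G$ be a two-player game with strategy sets $S_1,S_2$, utilities $u_1,u_2$, and a nonempty set $\mathrm{NE}$ of pure Nash equilibria taken as the solution set. Suppose that for all $x,x'\in S_1$ and $y,y'\in S_2$, $$u_1(x,y)\le u_1(x',y)\ \text{and}\ u_2(x,y)\le u_2(x,y')\ \Longrightarrow\ \mathrm{sw}(x,y)\le\mathrm{sw}(x',y)\ \text{or}\ \mathrm{sw}(x,y)\le\mathrm{sw}(x,y').$$ Then $\mathrm{PoTS}=\mathrm{PoS}$.
   Context: $\mathrm{sw}=u_1+u_2$, assumed to have positive maximum over $S_1\times S_2$; minima/maxima are read as infima/suprema if not attained. $T(\mathrm{NE})$ is the set of profiles $(x,y)$ such that $x$ is player 1's strategy in some element of $\mathrm{NE}$ and $y$ is player 2's strategy in some element of $\mathrm{NE}$. $\mathrm{PoS}=\max_{\mathrm{NE}}\mathrm{sw}/\max_S\mathrm{sw}$ and $\mathrm{PoTS}=\max_{T(\mathrm{NE})}\mathrm{sw}/\max_S\mathrm{sw}$. *)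

theory Defs
  imports Complex_Main
begin

definition sw :: "('a \<Rightarrow> 'b \<Rightarrow> real) \<Rightarrow> ('a \<Rightarrow> 'b \<Rightarrow> real) \<Rightarrow> 'a \<Rightarrow> 'b \<Rightarrow> real" where
  "sw u1 u2 x y = u1 x y + u2 x y"

definition NE :: "'a set \<Rightarrow> 'b set \<Rightarrow> ('a \<Rightarrow> 'b \<Rightarrow> real) \<Rightarrow> ('a \<Rightarrow> 'b \<Rightarrow> real) \<Rightarrow> ('a \<times> 'b) set" where
  "NE S1 S2 u1 u2 = {(x, y). x \<in> S1 \<and> y \<in> S2 \<and>
      (\<forall>x'\<in>S1. u1 x' y \<le> u1 x y) \<and> (\<forall>y'\<in>S2. u2 x y' \<le> u2 x y)}"

definition T_NE :: "'a set \<Rightarrow> 'b set \<Rightarrow> ('a \<Rightarrow> 'b \<Rightarrow> real) \<Rightarrow> ('a \<Rightarrow> 'b \<Rightarrow> real) \<Rightarrow> ('a \<times> 'b) set" where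
  "T_NE S1 S2 u1 u2 = fst ` NE S1 S2 u1 u2 \<times> snd ` NE S1 S2 u1 u2"

text \<open>Maxima read as suprema.\<close>
definition PoS :: "'a set \<Rightarrow> 'b set \<Rightarrow> ('a \<Rightarrow> 'b \<Rightarrow> real) \<Rightarrow> ('a \<Rightarrow> 'b \<Rightarrow> real) \<Rightarrow> real" where
  "PoS S1 S2 u1 u2 =
     (SUP p\<in>NE S1 S2 u1 u2. sw u1 u2 (fst p) (snd p)) / (SUP p\<in>S1 \<times> S2. sw u1 u2 (fst p) (snd p))"

definition PoTS :: "'a set \<Rightarrow> 'b set \<Rightarrow> ('a \<Rightarrow> 'b \<Rightarrow> real) \<Rightarrow> ('a \<Rightarrow> 'b \<Rightarrow> real) \<Rightarrow> real" where
  "PoTS S1 S2 u1 u2 =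
     (SUP p\<in>T_NE S1 S2 u1 u2. sw u1 u2 (fst p) (snd p)) / (SUP p\<in>S1 \<times> S2. sw u1 u2 (fst p) (snd p))"

end

theory Submission
  imports Defs
begin

text \<open>A profile (x, y) of T(NE) is assembled from equilibria (x, b) and (a, y). Since a is a best
  response to y and b a best response to x, neither player loses by deviating from (x, y) to
  (a, y) resp. (x, b), so the hypothesis of the theorem bounds sw(x, y) by the welfare of one of
  these two equilibria. Hence the welfare on T(NE) is dominated pointwise by the welfare on NE,
  and the two suprema coincide. The two prices share their denominator.\<close>

lemma NE_subset_T_NE: "NE S1 S2 u1 u2 \<subseteq> T_NE S1 S2 u1 u2"
  unfolding T_NE_def by force

lemma T_NE_subset: "T_NE S1 S2 u1 u2 \<subseteq> S1 \<times> S2"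
  unfolding T_NE_def NE_def by auto

lemma T_NE_dominated_by_NE:
  assumes hyp: "\<forall>x\<in>S1. \<forall>x'\<in>S1. \<forall>y\<in>S2. \<forall>y'\<in>S2.
               u1 x y \<le> u1 x' y \<and> u2 x y \<le> u2 x y' \<longrightarrow>
               sw u1 u2 x y \<le> sw u1 u2 x' y \<or> sw u1 u2 x y \<le> sw u1 u2 x y'"
    and xy: "(x, y) \<in> T_NE S1 S2 u1 u2"
  shows "\<exists>q\<in>NE S1 S2 u1 u2. sw u1 u2 x y \<le> sw u1 u2 (fst q) (snd q)"
proof -
  from xy obtain a b where xb: "(x, b) \<in> NE S1 S2 u1 u2" and ay: "(a, y) \<in> NE S1 S2 u1 u2"
    unfolding T_NE_def by force
  then have "x \<in> S1" "a \<in> S1" "y \<in> S2" "b \<in> S2"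
    and "u1 x y \<le> u1 a y" "u2 x y \<le> u2 x b"
    unfolding NE_def by auto
  with hyp have "sw u1 u2 x y \<le> sw u1 u2 a y \<or> sw u1 u2 x y \<le> sw u1 u2 x b"
    by blast
  with xb ay show ?thesis by force
qed

theorem proposition4:
  fixes S1 :: "'a set" and S2 :: "'b set" and u1 u2 :: "'a \<Rightarrow> 'b \<Rightarrow> real"
  assumes ne: "NE S1 S2 u1 u2 \<noteq> {}"
    and bdd: "bdd_above ((\<lambda>p. sw u1 u2 (fst p) (snd p)) ` (S1 \<times> S2))"
    and pos: "(SUP p\<in>S1 \<times> S2. sw u1 u2 (fst p) (snd p)) > 0"
    and hyp: "\<forall>x\<in>S1. \<forall>x'\<in>S1. \<forall>y\<in>S2. \<forall>y'\<in>S2.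
               u1 x y \<le> u1 x' y \<and> u2 x y \<le> u2 x y' \<longrightarrow>
               sw u1 u2 x y \<le> sw u1 u2 x' y \<or> sw u1 u2 x y \<le> sw u1 u2 x y'"
  shows "PoTS S1 S2 u1 u2 = PoS S1 S2 u1 u2"
proof -
  let ?sw = "\<lambda>p. sw u1 u2 (fst p) (snd p)"
  have NE_T: "NE S1 S2 u1 u2 \<subseteq> T_NE S1 S2 u1 u2"
    by (rule NE_subset_T_NE)
  have bdd_T: "bdd_above (?sw ` T_NE S1 S2 u1 u2)"
    by (rule bdd_above_mono[OF bdd image_mono[OF T_NE_subset]])
  have bdd_NE: "bdd_above (?sw ` NE S1 S2 u1 u2)"
    by (rule bdd_above_mono[OF bdd_T image_mono[OF NE_T]])
  have "(SUP p\<in>T_NE S1 S2 u1 u2. ?sw p) \<le> (SUP p\<in>NE S1 S2 u1 u2. ?sw p)"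
    using ne NE_T bdd_NE T_NE_dominated_by_NE[OF hyp]
    by (intro cSUP_mono) (auto simp: split_paired_all)
  moreover have "(SUP p\<in>NE S1 S2 u1 u2. ?sw p) \<le> (SUP p\<in>T_NE S1 S2 u1 u2. ?sw p)"
    using ne NE_T bdd_T by (intro cSUP_mono) auto
  ultimately show ?thesis
    unfolding PoTS_def PoS_def by simp
qed

end
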